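(* Let $\pi$ have density $\pi(x)=\tilde{\pi}(x)/Z$ with respect to $\mu$ on $\mathcal{X}$, with $Z=\int\tilde{\pi}\,d\mu$. Let $\bar{q}$ be a probability density on $\mathcal{X}\times\{1,\dots,K\}$ (with respect to $\mu\otimes$ counting measure), written $\bar{q}(x,l)=q_l(x)\alpha(l)$ with $\alpha$ its marginal on labels and $q_l$ the conditional density of $x$ given $l$, and assume that for every $i$, $\alpha(i)>0$ and $\bar{q}(x,i)>0$ whenever $\tilde{\pi}(x)>0$. Let $(X_n,L_n)$, $n=1,\dots,N$, be i.i.d. from $\bar{q}$. For $i\in\{1,\dots,K\}$ let $N_i=\sum_{n=1}^N\mathbb{1}(L_n=i)$, $T_{ij}=\inf\{n\geq1:\sum_{m=1}^{n}\mathbb{1}(L_m=i)=j\}$, $X_{ij}=X_{T_{ij}}$ for $j=1,\dots,N_i$, and $$\widehat{Z}_i=\frac{1}{N}\sum_{j=1}^{N_i}\frac{\tilde{\pi}(X_{ij})}{\bar{q}(X_{ij},i)}.$$ Then for each $i\in\{1,\dots,K\}$, $$E(\widehat{Z}_i)=Z,\qquad \operatorname{var}(\widehat{Z}_i/Z)=\frac{1}{N}\left(E_{X\sim\pi}\left(\frac{\pi(X)}{\bar{q}(X,i)}\right)-1\right),$$ and for any $i\neq j$ in $\{1,\dots,K\}$, $$\operatorname{cov}(\widehat{Z}_i/Z,\widehat{Z}_j/Z)=-\frac{1}{N}.$$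
   Context: $N_{1:K}\sim\mathrm{Mult}(N,\alpha_{1:K})$; $X_{ij}$ is the $j$-th sampled point carrying label $i$. *)

theory Defs
  imports "HOL-Probability.Probability"
begin

text \<open>Sample: \<omega> :: nat \<Rightarrow> 'a \<times> nat, with \<omega> n = (X_n, L_n) for n = 1..N.\<close>

definition Ncount :: "nat \<Rightarrow> (nat \<Rightarrow> 'a \<times> nat) \<Rightarrow> nat \<Rightarrow> nat" where
  "Ncount N \<omega> i = card {n \<in> {1..N}. snd (\<omega> n) = i}"

definition Tidx :: "(nat \<Rightarrow> 'a \<times> nat) \<Rightarrow> nat \<Rightarrow> nat \<Rightarrow> nat" where
  "Tidx \<omega> i j = Inf {n. n \<ge> 1 \<and> card {m \<in> {1..n}. snd (\<omega> m) = i} = j}"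

definition Xlab :: "(nat \<Rightarrow> 'a \<times> nat) \<Rightarrow> nat \<Rightarrow> nat \<Rightarrow> 'a" where
  "Xlab \<omega> i j = fst (\<omega> (Tidx \<omega> i j))"

definition Zhat :: "nat \<Rightarrow> ('a \<Rightarrow> real) \<Rightarrow> ('a \<times> nat \<Rightarrow> real)
    \<Rightarrow> (nat \<Rightarrow> 'a \<times> nat) \<Rightarrow> nat \<Rightarrow> real" where
  "Zhat N pit qbar \<omega> i =
     (1 / real N) * (\<Sum>j = 1..Ncount N \<omega> i. pit (Xlab \<omega> i j) / qbar (Xlab \<omega> i j, i))"

definition alpha :: "'a measure \<Rightarrow> ('a \<times> nat \<Rightarrow> real) \<Rightarrow> nat \<Rightarrow> real" where
  "alpha \<mu> qbar l = (\<integral>x. qbar (x, l) \<partial>\<mu>)"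

text \<open>Variance valued in [0,\<infinity>] (so it may be infinite), and covariance.\<close>
definition evar :: "'b measure \<Rightarrow> ('b \<Rightarrow> real) \<Rightarrow> ennreal" where
  "evar M X = (\<integral>\<^sup>+ \<omega>. ennreal ((X \<omega> - (\<integral>\<omega>'. X \<omega>' \<partial>M))\<^sup>2) \<partial>M)"

definition cov :: "'b measure \<Rightarrow> ('b \<Rightarrow> real) \<Rightarrow> ('b \<Rightarrow> real) \<Rightarrow> real" where
  "cov M X Y = (\<integral>\<omega>. (X \<omega> - (\<integral>\<omega>'. X \<omega>' \<partial>M)) * (Y \<omega> - (\<integral>\<omega>'. Y \<omega>' \<partial>M)) \<partial>M)"

end

theory Submission
  imports Defs
begin

(* Write pi = pit / Z. Counting the label-i points among the first n sample points inverts
   j |-> T_ij, so Zhat_i / Z is the sample mean of N i.i.d. copies of the weight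
   W_i (x, l) = [l = i] pi x / qbar (x, i).  As qbar (., i) > 0 wherever pi > 0,
   E W_i = int pi = 1 and E W_i^2 = E_pi (pi / qbar (., i)); and W_i W_j = 0 for i <> j,
   so cov (W_i, W_j) = -1.  An i.i.d. sample mean keeps the mean and divides variances and
   covariances by N.  If E W_i^2 is infinite, so is the variance of the sample mean, since a
   single nonnegative term W_i (X_1, L_1) is at most N times the sample mean. *)

definition sample_mean :: "nat \<Rightarrow> ('b \<Rightarrow> real) \<Rightarrow> (nat \<Rightarrow> 'b) \<Rightarrow> real" where
  "sample_mean N f \<omega> = (\<Sum>n = 1..N. f (\<omega> n)) / real N"

definition label_weight :: "('a \<Rightarrow> real) \<Rightarrow> ('a \<times> 'l \<Rightarrow> real) \<Rightarrow> 'l \<Rightarrow> 'a \<times> 'l \<Rightarrow> real" where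
  "label_weight pit qbar i z = (if snd z = i then pit (fst z) / qbar (fst z, i) else 0)"

lemma card_label_prefix_less:
  fixes \<omega> :: "nat \<Rightarrow> 'a \<times> nat"
  assumes "m < n" "snd (\<omega> n) = i"
  shows "card {k \<in> {1..m}. snd (\<omega> k) = i} < card {k \<in> {1..n}. snd (\<omega> k) = i}"
proof (rule psubset_card_mono)
  have "n \<in> {k \<in> {1..n}. snd (\<omega> k) = i}" "n \<notin> {k \<in> {1..m}. snd (\<omega> k) = i}"
    using assms by auto
  moreover have "{k \<in> {1..m}. snd (\<omega> k) = i} \<subseteq> {k \<in> {1..n}. snd (\<omega> k) = i}"
    using assms by auto
  ultimately show "{k \<in> {1..m}. snd (\<omega> k) = i} \<subset> {k \<in> {1..n}. snd (\<omega> k) = i}"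
    by blast
qed simp

lemma Tidx_card_label_prefix:
  fixes \<omega> :: "nat \<Rightarrow> 'a \<times> nat"
  assumes "1 \<le> n" "snd (\<omega> n) = i"
  shows "Tidx \<omega> i (card {k \<in> {1..n}. snd (\<omega> k) = i}) = n"
  unfolding Tidx_def
proof (rule cInf_eq_minimum)
  fix m assume "m \<in> {m. 1 \<le> m \<and> card {k \<in> {1..m}. snd (\<omega> k) = i} = card {k \<in> {1..n}. snd (\<omega> k) = i}}"
  then show "n \<le> m"
    using card_label_prefix_less[of m n \<omega> i] assms(2) by (cases "m < n") auto
qed (use assms in simp)

lemma bij_betw_card_label_prefix:
  fixes \<omega> :: "nat \<Rightarrow> 'a \<times> nat"
  shows "bij_betw (\<lambda>n. card {k \<in> {1..n}. snd (\<omega> k) = i})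
           {n \<in> {1..N}. snd (\<omega> n) = i} {1..Ncount N \<omega> i}"
proof -
  let ?S = "{n \<in> {1..N}. snd (\<omega> n) = i}"
  let ?c = "\<lambda>n. card {k \<in> {1..n}. snd (\<omega> k) = i}"
  have inj: "inj_on ?c ?S"
    by (rule strict_mono_on_imp_inj_on)
      (auto simp only: strict_mono_on_def mem_Collect_eq intro: card_label_prefix_less)
  have "?c ` ?S \<subseteq> {1..Ncount N \<omega> i}"
    unfolding Ncount_def by (auto simp: Suc_le_eq card_gt_0_iff intro!: card_mono)
  moreover have "card (?c ` ?S) = card {1..Ncount N \<omega> i}"
    using card_image[OF inj] by (simp add: Ncount_def)
  ultimately show ?thesis
    using inj by (simp add: bij_betw_def card_subset_eq)
qed

lemma Zhat_eq_sample_mean: "Zhat N pit qbar \<omega> i = sample_mean N (label_weight pit qbar i) \<omega>"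
proof -
  let ?S = "{n \<in> {1..N}. snd (\<omega> n) = i}"
  let ?F = "\<lambda>n. pit (fst (\<omega> n)) / qbar (fst (\<omega> n), i)"
  have "(\<Sum>j = 1..Ncount N \<omega> i. ?F (Tidx \<omega> i j))
      = (\<Sum>n\<in>?S. ?F (Tidx \<omega> i (card {k \<in> {1..n}. snd (\<omega> k) = i})))"
    by (rule sum.reindex_bij_betw[OF bij_betw_card_label_prefix, symmetric])
  also have "\<dots> = sum ?F ?S"
  proof (rule sum.cong[OF refl])
    fix n assume "n \<in> ?S"
    then have "Tidx \<omega> i (card {k \<in> {1..n}. snd (\<omega> k) = i}) = n"
      by (intro Tidx_card_label_prefix) auto
    then show "?F (Tidx \<omega> i (card {k \<in> {1..n}. snd (\<omega> k) = i})) = ?F n"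
      by simp
  qed
  also have "\<dots> = (\<Sum>n = 1..N. label_weight pit qbar i (\<omega> n))"
    unfolding label_weight_def by (rule sum.inter_filter) simp
  finally show ?thesis
    by (simp add: Zhat_def sample_mean_def Xlab_def)
qed

lemma Zhat_divide_eq_sample_mean:
  "Zhat N pit qbar \<omega> i / Z = sample_mean N (label_weight (\<lambda>x. pit x / Z) qbar i) \<omega>"
proof -
  have "label_weight (\<lambda>x. pit x / Z) qbar i z = label_weight pit qbar i z / Z" for z
    by (simp add: label_weight_def)
  then show ?thesis
    by (simp add: Zhat_eq_sample_mean sample_mean_def sum_divide_distrib[symmetric] mult.commute)
qed

lemma
  fixes f :: "'i \<Rightarrow> 'a \<Rightarrow> real"
  assumes Q: "prob_space Q" and I: "finite I" "J \<subseteq> I"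
    and f: "\<And>j. j \<in> J \<Longrightarrow> integrable Q (f j)"
  shows integrable_PiM_prod_coordinates: "integrable (PiM I (\<lambda>_. Q)) (\<lambda>\<omega>. \<Prod>j\<in>J. f j (\<omega> j))"
    and integral_PiM_prod_coordinates:
      "(\<integral>\<omega>. (\<Prod>j\<in>J. f j (\<omega> j)) \<partial>PiM I (\<lambda>_. Q)) = (\<Prod>j\<in>J. \<integral>z. f j z \<partial>Q)"
proof -
  interpret Q: prob_space Q by fact
  interpret product_sigma_finite "\<lambda>_. Q" by standard
  define F where "F j z = (if j \<in> J then f j z else 1)" for j z
  have restrict: "(\<Prod>j\<in>I. if j \<in> J then a j else 1) = (\<Prod>j\<in>J. a j)" for a :: "'i \<Rightarrow> real"
    using prod.inter_restrict[OF I(1), of a J] I(2) by (simp add: Int_absorb1)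
  have F_int: "integrable Q (F j)" if "j \<in> I" for j
    using f by (cases "j \<in> J") (simp_all add: F_def[abs_def])
  have fun_eq: "(\<lambda>\<omega>. \<Prod>j\<in>J. f j (\<omega> j)) = (\<lambda>\<omega>. \<Prod>j\<in>I. F j (\<omega> j))"
    by (simp add: F_def restrict)
  have integral_eq: "(\<Prod>j\<in>J. \<integral>z. f j z \<partial>Q) = (\<Prod>j\<in>I. \<integral>z. F j z \<partial>Q)"
    unfolding restrict[symmetric] by (intro prod.cong) (simp_all add: F_def Q.prob_space)
  show "integrable (PiM I (\<lambda>_. Q)) (\<lambda>\<omega>. \<Prod>j\<in>J. f j (\<omega> j))"
    unfolding fun_eq by (rule product_integrable_prod[OF I(1) F_int])
  show "(\<integral>\<omega>. (\<Prod>j\<in>J. f j (\<omega> j)) \<partial>PiM I (\<lambda>_. Q)) = (\<Prod>j\<in>J. \<integral>z. f j z \<partial>Q)"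
    unfolding fun_eq integral_eq by (rule product_integral_prod[OF I(1) F_int])
qed

lemma
  fixes f :: "'a \<Rightarrow> real"
  assumes "prob_space Q" "finite I" "n \<in> I" "integrable Q f"
  shows integrable_PiM_coordinate: "integrable (PiM I (\<lambda>_. Q)) (\<lambda>\<omega>. f (\<omega> n))"
    and integral_PiM_coordinate: "(\<integral>\<omega>. f (\<omega> n) \<partial>PiM I (\<lambda>_. Q)) = (\<integral>z. f z \<partial>Q)"
  using integrable_PiM_prod_coordinates[of Q I "{n}" "\<lambda>_. f"]
    integral_PiM_prod_coordinates[of Q I "{n}" "\<lambda>_. f"] assms by simp_all

lemma
  fixes f g :: "'a \<Rightarrow> real"
  assumes "prob_space Q" "finite I" "n \<in> I" "m \<in> I" "n \<noteq> m" "integrable Q f" "integrable Q g"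
  shows integrable_PiM_two_coordinates: "integrable (PiM I (\<lambda>_. Q)) (\<lambda>\<omega>. f (\<omega> n) * g (\<omega> m))"
    and integral_PiM_two_coordinates:
      "(\<integral>\<omega>. f (\<omega> n) * g (\<omega> m) \<partial>PiM I (\<lambda>_. Q)) = (\<integral>z. f z \<partial>Q) * (\<integral>z. g z \<partial>Q)"
  using integrable_PiM_prod_coordinates[of Q I "{n, m}" "\<lambda>j. if j = n then f else g"]
    integral_PiM_prod_coordinates[of Q I "{n, m}" "\<lambda>j. if j = n then f else g"] assms
  by simp_all

lemma nn_integral_PiM_coordinate:
  assumes "prob_space Q" "n \<in> I" "f \<in> borel_measurable Q"
  shows "(\<integral>\<^sup>+\<omega>. f (\<omega> n) \<partial>PiM I (\<lambda>_. Q)) = (\<integral>\<^sup>+z. f z \<partial>Q)"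
proof -
  have "(\<integral>\<^sup>+\<omega>. f (\<omega> n) \<partial>PiM I (\<lambda>_. Q)) = (\<integral>\<^sup>+z. f z \<partial>distr (PiM I (\<lambda>_. Q)) Q (\<lambda>\<omega>. \<omega> n))"
    using assms by (intro nn_integral_distr[symmetric]) auto
  then show ?thesis
    using distr_PiM_component[of I "\<lambda>_. Q" n] assms by simp
qed

lemma
  fixes h1 h2 :: "'a \<Rightarrow> real"
  assumes Q: "prob_space Q" and I: "finite I" "n \<in> I" "m \<in> I"
    and h1: "integrable Q h1" and h2: "integrable Q h2" and h12: "integrable Q (\<lambda>z. h1 z * h2 z)"
    and centered: "(\<integral>z. h1 z \<partial>Q) = 0"
  shows integrable_PiM_coordinates_mult: "integrable (PiM I (\<lambda>_. Q)) (\<lambda>\<omega>. h1 (\<omega> n) * h2 (\<omega> m))"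
    and integral_PiM_coordinates_mult_centered:
      "(\<integral>\<omega>. h1 (\<omega> n) * h2 (\<omega> m) \<partial>PiM I (\<lambda>_. Q)) = (if n = m then \<integral>z. h1 z * h2 z \<partial>Q else 0)"
proof -
  show "integrable (PiM I (\<lambda>_. Q)) (\<lambda>\<omega>. h1 (\<omega> n) * h2 (\<omega> m))"
    using integrable_PiM_coordinate[OF Q I(1,2) h12] integrable_PiM_two_coordinates[OF Q I _ h1 h2]
    by (cases "n = m") auto
  show "(\<integral>\<omega>. h1 (\<omega> n) * h2 (\<omega> m) \<partial>PiM I (\<lambda>_. Q)) = (if n = m then \<integral>z. h1 z * h2 z \<partial>Q else 0)"
    using integral_PiM_coordinate[OF Q I(1,2) h12] integral_PiM_two_coordinates[OF Q I _ h1 h2] centered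
    by (cases "n = m") auto
qed

lemma (in prob_space) cov_eq_expectation_mult_minus:
  assumes "integrable M X" "integrable M Y" "integrable M (\<lambda>\<omega>. X \<omega> * Y \<omega>)"
  shows "cov M X Y = expectation (\<lambda>\<omega>. X \<omega> * Y \<omega>) - expectation X * expectation Y"
  using assms by (simp add: cov_def algebra_simps prob_space)

locale iid_sample = prob_space Q for Q :: "'a measure" +
  fixes N :: nat
  assumes sample_size_pos: "1 \<le> N"
begin

lemma integral_sample_mean:
  fixes f :: "'a \<Rightarrow> real"
  assumes "integrable Q f"
  shows "(\<integral>\<omega>. sample_mean N f \<omega> \<partial>PiM {1..N} (\<lambda>_. Q)) = expectation f"
proof -
  have coord: "integrable (PiM {1..N} (\<lambda>_. Q)) (\<lambda>\<omega>. f (\<omega> n))"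
    "(\<integral>\<omega>. f (\<omega> n) \<partial>PiM {1..N} (\<lambda>_. Q)) = expectation f" if "n \<in> {1..N}" for n
    using integrable_PiM_coordinate[OF prob_space_axioms _ that assms]
      integral_PiM_coordinate[OF prob_space_axioms _ that assms] by simp_all
  show ?thesis
    unfolding sample_mean_def using coord sample_size_pos by simp
qed

lemma sample_mean_minus_const:
  "sample_mean N f \<omega> - c = sample_mean N (\<lambda>z. f z - c) \<omega>"
  using sample_size_pos by (simp add: sample_mean_def sum_subtractf field_simps)

lemma
  fixes h1 h2 :: "'a \<Rightarrow> real"
  assumes h1: "integrable Q h1" and h2: "integrable Q h2"
    and h12: "integrable Q (\<lambda>z. h1 z * h2 z)" and centered: "expectation h1 = 0"
  shows integrable_sample_mean_mult:
      "integrable (PiM {1..N} (\<lambda>_. Q)) (\<lambda>\<omega>. sample_mean N h1 \<omega> * sample_mean N h2 \<omega>)"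
    and integral_sample_mean_mult:
      "(\<integral>\<omega>. sample_mean N h1 \<omega> * sample_mean N h2 \<omega> \<partial>PiM {1..N} (\<lambda>_. Q))
         = expectation (\<lambda>z. h1 z * h2 z) / real N"
proof -
  let ?P = "PiM {1..N} (\<lambda>_. Q)"
  have product: "sample_mean N h1 \<omega> * sample_mean N h2 \<omega>
      = (\<Sum>n = 1..N. \<Sum>m = 1..N. h1 (\<omega> n) * h2 (\<omega> m)) / (real N)\<^sup>2" for \<omega>
    by (simp add: sample_mean_def sum_product power2_eq_square)
  have pair_term: "integrable ?P (\<lambda>\<omega>. h1 (\<omega> n) * h2 (\<omega> m)) \<and>
      (\<integral>\<omega>. h1 (\<omega> n) * h2 (\<omega> m) \<partial>?P) = (if n = m then expectation (\<lambda>z. h1 z * h2 z) else 0)"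
    if "n \<in> {1..N}" "m \<in> {1..N}" for n m
    using integrable_PiM_coordinates_mult[OF prob_space_axioms _ that h1 h2 h12 centered]
      integral_PiM_coordinates_mult_centered[OF prob_space_axioms _ that h1 h2 h12 centered] by simp
  show "integrable ?P (\<lambda>\<omega>. sample_mean N h1 \<omega> * sample_mean N h2 \<omega>)"
    unfolding product using pair_term
    by (intro integrable_divide Bochner_Integration.integrable_sum) blast
  have "(\<integral>\<omega>. (\<Sum>n = 1..N. \<Sum>m = 1..N. h1 (\<omega> n) * h2 (\<omega> m)) \<partial>?P)
      = (\<Sum>n = 1..N. \<Sum>m = 1..N. \<integral>\<omega>. h1 (\<omega> n) * h2 (\<omega> m) \<partial>?P)"
    using pair_term by (subst Bochner_Integration.integral_sum)
      (auto intro!: sum.cong Bochner_Integration.integral_sum Bochner_Integration.integrable_sum)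
  also have "\<dots> = (\<Sum>n = 1..N. \<Sum>m = 1..N. if n = m then expectation (\<lambda>z. h1 z * h2 z) else 0)"
    using pair_term by (intro sum.cong refl) blast
  also have "\<dots> = real N * expectation (\<lambda>z. h1 z * h2 z)"
    by simp
  finally show "(\<integral>\<omega>. sample_mean N h1 \<omega> * sample_mean N h2 \<omega> \<partial>?P)
      = expectation (\<lambda>z. h1 z * h2 z) / real N"
    unfolding product using sample_size_pos by (simp add: power2_eq_square)
qed

lemma cov_sample_mean:
  fixes f g :: "'a \<Rightarrow> real"
  assumes f: "integrable Q f" and g: "integrable Q g" and fg: "integrable Q (\<lambda>z. f z * g z)"
  shows "cov (PiM {1..N} (\<lambda>_. Q)) (sample_mean N f) (sample_mean N g) = cov Q f g / real N"
proof -
  let ?f = "\<lambda>z. f z - expectation f" and ?g = "\<lambda>z. g z - expectation g"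
  have "integrable Q (\<lambda>z. ?f z * ?g z)"
    using f g fg by (simp add: algebra_simps)
  then show ?thesis
    unfolding cov_def integral_sample_mean[OF f] integral_sample_mean[OF g] sample_mean_minus_const
    using f g by (intro integral_sample_mean_mult) (simp_all add: prob_space)
qed

lemma power2_observation_le_sample_mean:
  fixes f :: "'a \<Rightarrow> real"
  assumes nonneg: "\<And>n. n \<in> {1..N} \<Longrightarrow> 0 \<le> f (\<omega> n)" and k: "k \<in> {1..N}"
  shows "(f (\<omega> k))\<^sup>2 \<le> 2 * (real N)\<^sup>2 * ((sample_mean N f \<omega> - c)\<^sup>2 + c\<^sup>2)"
proof -
  have "f (\<omega> k) \<le> (\<Sum>n = 1..N. f (\<omega> n))"
    using k nonneg by (intro member_le_sum) auto
  also have "\<dots> = real N * sample_mean N f \<omega>"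
    using sample_size_pos by (simp add: sample_mean_def)
  finally have "(f (\<omega> k))\<^sup>2 \<le> (real N)\<^sup>2 * (sample_mean N f \<omega>)\<^sup>2"
    using nonneg[OF k] by (metis power_mono power_mult_distrib)
  also have "\<dots> \<le> (real N)\<^sup>2 * (2 * ((sample_mean N f \<omega> - c)\<^sup>2 + c\<^sup>2))"
    using zero_le_power2[of "sample_mean N f \<omega> - 2 * c"]
    by (intro mult_left_mono) (simp_all add: power2_eq_square algebra_simps)
  finally show ?thesis
    by (simp only: mult_ac)
qed

lemma evar_sample_mean_eq_top:
  fixes f :: "'a \<Rightarrow> real"
  assumes f_meas: "f \<in> borel_measurable Q" and f_nonneg: "\<And>z. z \<in> space Q \<Longrightarrow> 0 \<le> f z"
    and infinite: "(\<integral>\<^sup>+z. ennreal ((f z)\<^sup>2) \<partial>Q) = \<top>"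
  shows "evar (PiM {1..N} (\<lambda>_. Q)) (sample_mean N f) = \<top>"
proof -
  let ?P = "PiM {1..N} (\<lambda>_. Q)"
  define c where "c = (\<integral>\<omega>. sample_mean N f \<omega> \<partial>?P)"
  interpret P: prob_space ?P
    by (intro prob_space_PiM prob_space_axioms)
  have [measurable]: "sample_mean N f \<in> borel_measurable ?P"
    unfolding sample_mean_def[abs_def] using f_meas by measurable
  define C where "C = 2 * (real N)\<^sup>2"
  have bound: "ennreal ((f (\<omega> 1))\<^sup>2) \<le> ennreal C * (ennreal ((sample_mean N f \<omega> - c)\<^sup>2) + ennreal (c\<^sup>2))"
    if "\<omega> \<in> space ?P" for \<omega>
  proof -
    have "(f (\<omega> 1))\<^sup>2 \<le> C * ((sample_mean N f \<omega> - c)\<^sup>2 + c\<^sup>2)"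
      unfolding C_def using f_nonneg that sample_size_pos
      by (intro power2_observation_le_sample_mean) (auto simp: space_PiM PiE_iff)
    then show ?thesis
      by (simp add: C_def ennreal_leI flip: ennreal_plus ennreal_mult'')
  qed
  have "\<top> = (\<integral>\<^sup>+\<omega>. ennreal ((f (\<omega> 1))\<^sup>2) \<partial>?P)"
    using infinite nn_integral_PiM_coordinate[OF prob_space_axioms, of 1 "{1..N}" "\<lambda>z. ennreal ((f z)\<^sup>2)"]
      f_meas sample_size_pos
    by simp
  also have "\<dots> \<le> (\<integral>\<^sup>+\<omega>. ennreal C * (ennreal ((sample_mean N f \<omega> - c)\<^sup>2) + ennreal (c\<^sup>2)) \<partial>?P)"
    by (rule nn_integral_mono) (rule bound)
  also have "\<dots> = ennreal C * (evar ?P (sample_mean N f) + ennreal (c\<^sup>2))"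
    unfolding evar_def c_def[symmetric]
    by (subst nn_integral_cmult, measurable, subst nn_integral_add, measurable)
      (simp only: nn_integral_const P.emeasure_space_1 mult_1_right)
  finally have "ennreal C * (evar ?P (sample_mean N f) + ennreal (c\<^sup>2)) = \<top>"
    by (simp add: top_unique)
  then show ?thesis
    by (simp add: ennreal_mult_eq_top_iff)
qed

lemma evar_sample_mean:
  fixes f :: "'a \<Rightarrow> real"
  assumes f_int: "integrable Q f" and f_nonneg: "\<And>z. z \<in> space Q \<Longrightarrow> 0 \<le> f z"
  shows "evar (PiM {1..N} (\<lambda>_. Q)) (sample_mean N f)
           = ennreal (1 / real N) * ((\<integral>\<^sup>+z. ennreal ((f z)\<^sup>2) \<partial>Q) - ennreal ((expectation f)\<^sup>2))"
proof (cases "(\<integral>\<^sup>+z. ennreal ((f z)\<^sup>2) \<partial>Q) = \<top>")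
  case True
  then show ?thesis
    using evar_sample_mean_eq_top[OF borel_measurable_integrable[OF f_int] f_nonneg] sample_size_pos
    by (simp add: ennreal_mult_top)
next
  case False
  let ?P = "PiM {1..N} (\<lambda>_. Q)" and ?h = "\<lambda>z. f z - expectation f"
  obtain s where s: "(\<integral>\<^sup>+z. ennreal ((f z)\<^sup>2) \<partial>Q) = ennreal s" "0 \<le> s"
    using False by (cases "(\<integral>\<^sup>+z. ennreal ((f z)\<^sup>2) \<partial>Q)") auto
  have "has_bochner_integral Q (\<lambda>z. (f z)\<^sup>2) s"
    using s f_int by (intro has_bochner_integral_nn_integral) auto
  then have sq_int: "integrable Q (\<lambda>z. f z * f z)" and sq_E: "expectation (\<lambda>z. f z * f z) = s"
    by (auto simp: has_bochner_integral_iff power2_eq_square)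
  have h_int: "integrable Q ?h" and hh_int: "integrable Q (\<lambda>z. ?h z * ?h z)"
    using f_int sq_int by (simp_all add: algebra_simps)
  have h_E: "expectation ?h = 0" and hh_E: "expectation (\<lambda>z. ?h z * ?h z) = s - (expectation f)\<^sup>2"
    using cov_eq_expectation_mult_minus[OF f_int f_int sq_int] f_int sq_E
    by (simp_all add: cov_def prob_space power2_eq_square)
  have centered: "sample_mean N f \<omega> - (\<integral>\<omega>. sample_mean N f \<omega> \<partial>?P) = sample_mean N ?h \<omega>" for \<omega>
    unfolding integral_sample_mean[OF f_int] by (rule sample_mean_minus_const)
  have "evar ?P (sample_mean N f) = (\<integral>\<^sup>+\<omega>. ennreal (sample_mean N ?h \<omega> * sample_mean N ?h \<omega>) \<partial>?P)"
    unfolding evar_def centered power2_eq_square ..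
  also have "\<dots> = ennreal ((s - (expectation f)\<^sup>2) / real N)"
    using integrable_sample_mean_mult[OF h_int h_int hh_int h_E]
      integral_sample_mean_mult[OF h_int h_int hh_int h_E] hh_E
    by (subst nn_integral_eq_integral) auto
  also have "\<dots> = ennreal (1 / real N) * (ennreal s - ennreal ((expectation f)\<^sup>2))"
    by (simp add: ennreal_minus divide_inverse ennreal_mult' mult.commute)
  finally show ?thesis
    using s by simp
qed

end

lemma borel_measurable_label_section:
  assumes "qbar \<in> borel_measurable (\<mu> \<Otimes>\<^sub>M count_space L)" and "i \<in> L"
  shows "(\<lambda>x. qbar (x, i)) \<in> borel_measurable \<mu>"
proof -
  have "(\<lambda>x. (x, i)) \<in> measurable \<mu> (\<mu> \<Otimes>\<^sub>M count_space L)"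
    using \<open>i \<in> L\<close> by (intro measurable_Pair) auto
  then show ?thesis
    using assms(1) by measurable
qed

lemma borel_measurable_label_weight:
  assumes [measurable]: "pit \<in> borel_measurable \<mu>" "qbar \<in> borel_measurable (\<mu> \<Otimes>\<^sub>M count_space L)"
    and "i \<in> L"
  shows "label_weight pit qbar i \<in> borel_measurable (\<mu> \<Otimes>\<^sub>M count_space L)"
  using borel_measurable_label_section[OF assms(2,3)] unfolding label_weight_def[abs_def] by measurable

lemma label_weight_nonneg:
  assumes "z \<in> space (\<mu> \<Otimes>\<^sub>M count_space L)" and "\<And>x. x \<in> space \<mu> \<Longrightarrow> 0 \<le> pit x"
    and "\<And>x l. x \<in> space \<mu> \<Longrightarrow> l \<in> L \<Longrightarrow> 0 \<le> qbar (x, l)"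
  shows "0 \<le> label_weight pit qbar i z"
  using assms by (auto simp: label_weight_def space_pair_measure)

lemma nn_integral_density_label_restrict:
  fixes q :: "'a \<times> 'l \<Rightarrow> real" and f :: "'a \<Rightarrow> real"
  assumes L: "finite L" "i \<in> L"
    and [measurable]: "q \<in> borel_measurable (\<mu> \<Otimes>\<^sub>M count_space L)" "f \<in> borel_measurable \<mu>"
    and q_nonneg: "\<And>x l. x \<in> space \<mu> \<Longrightarrow> l \<in> L \<Longrightarrow> 0 \<le> q (x, l)"
  shows "(\<integral>\<^sup>+z. ennreal (if snd z = i then f (fst z) else 0) \<partial>density (\<mu> \<Otimes>\<^sub>M count_space L) q)
           = (\<integral>\<^sup>+x. ennreal (q (x, i) * f x) \<partial>\<mu>)"
proof -
  interpret L: sigma_finite_measure "count_space L"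
    using L by (intro sigma_finite_measure_count_space_finite)
  let ?g = "\<lambda>z. ennreal (q z) * ennreal (if snd z = i then f (fst z) else 0)"
  have "(\<integral>\<^sup>+z. ennreal (if snd z = i then f (fst z) else 0) \<partial>density (\<mu> \<Otimes>\<^sub>M count_space L) q)
      = (\<integral>\<^sup>+x. \<integral>\<^sup>+l. ?g (x, l) \<partial>count_space L \<partial>\<mu>)"
    by (simp add: nn_integral_density L.nn_integral_fst[symmetric])
  also have "\<dots> = (\<integral>\<^sup>+x. ennreal (q (x, i) * f x) \<partial>\<mu>)"
  proof (rule nn_integral_cong)
    fix x assume x: "x \<in> space \<mu>"
    have "(\<integral>\<^sup>+l. ?g (x, l) \<partial>count_space L) = (\<Sum>l\<in>L. ?g (x, l))"
      by (rule nn_integral_count_space_finite[OF L(1)])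
    also have "\<dots> = (\<Sum>l\<in>L. if l = i then ennreal (q (x, i)) * ennreal (f x) else 0)"
      by (rule sum.cong) auto
    also have "\<dots> = ennreal (q (x, i) * f x)"
      using L q_nonneg[OF x] by (simp add: ennreal_mult')
    finally show "(\<integral>\<^sup>+l. ?g (x, l) \<partial>count_space L) = ennreal (q (x, i) * f x)" .
  qed
  finally show ?thesis .
qed

lemma nn_integral_label_weight_power:
  fixes pit :: "'a \<Rightarrow> real" and qbar :: "'a \<times> 'l \<Rightarrow> real"
  assumes L: "finite L" "i \<in> L"
    and [measurable]: "pit \<in> borel_measurable \<mu>" "qbar \<in> borel_measurable (\<mu> \<Otimes>\<^sub>M count_space L)"
    and pit_nonneg: "\<And>x. x \<in> space \<mu> \<Longrightarrow> 0 \<le> pit x"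
    and q_nonneg: "\<And>x l. x \<in> space \<mu> \<Longrightarrow> l \<in> L \<Longrightarrow> 0 \<le> qbar (x, l)"
    and q_pos: "\<And>x. x \<in> space \<mu> \<Longrightarrow> 0 < pit x \<Longrightarrow> 0 < qbar (x, i)"
  shows "(\<integral>\<^sup>+z. ennreal (label_weight pit qbar i z ^ Suc k) \<partial>density (\<mu> \<Otimes>\<^sub>M count_space L) qbar)
           = (\<integral>\<^sup>+x. ennreal (pit x * (pit x / qbar (x, i)) ^ k) \<partial>\<mu>)"
proof -
  note [measurable] = borel_measurable_label_section[OF _ L(2)]
  have "(\<integral>\<^sup>+z. ennreal (label_weight pit qbar i z ^ Suc k) \<partial>density (\<mu> \<Otimes>\<^sub>M count_space L) qbar)
      = (\<integral>\<^sup>+x. ennreal (qbar (x, i) * (pit x / qbar (x, i)) ^ Suc k) \<partial>\<mu>)"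
    unfolding label_weight_def if_distrib[of "\<lambda>w. w ^ Suc k"] power_0_Suc
    by (rule nn_integral_density_label_restrict[OF L]) (use q_nonneg in simp_all)
  also have "\<dots> = (\<integral>\<^sup>+x. ennreal (pit x * (pit x / qbar (x, i)) ^ k) \<partial>\<mu>)"
  proof (rule nn_integral_cong)
    fix x assume x: "x \<in> space \<mu>"
    show "ennreal (qbar (x, i) * (pit x / qbar (x, i)) ^ Suc k) = ennreal (pit x * (pit x / qbar (x, i)) ^ k)"
    proof (cases "pit x = 0")
      case False
      then have "qbar (x, i) \<noteq> 0"
        using q_pos[OF x] pit_nonneg[OF x] by fastforce
      then show ?thesis
        by simp
    qed simp
  qed
  finally show ?thesis .
qed

lemma
  fixes pit :: "'a \<Rightarrow> real" and qbar :: "'a \<times> 'l \<Rightarrow> real"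
  assumes L: "finite L" "i \<in> L"
    and pit_meas: "pit \<in> borel_measurable \<mu>" and pit_nonneg: "\<And>x. x \<in> space \<mu> \<Longrightarrow> 0 \<le> pit x"
    and pit_int: "integrable \<mu> pit"
    and q_meas: "qbar \<in> borel_measurable (\<mu> \<Otimes>\<^sub>M count_space L)"
    and q_nonneg: "\<And>x l. x \<in> space \<mu> \<Longrightarrow> l \<in> L \<Longrightarrow> 0 \<le> qbar (x, l)"
    and q_pos: "\<And>x. x \<in> space \<mu> \<Longrightarrow> 0 < pit x \<Longrightarrow> 0 < qbar (x, i)"
  shows integrable_label_weight:
      "integrable (density (\<mu> \<Otimes>\<^sub>M count_space L) qbar) (label_weight pit qbar i)"
    and integral_label_weight:
      "(\<integral>z. label_weight pit qbar i z \<partial>density (\<mu> \<Otimes>\<^sub>M count_space L) qbar) = (\<integral>x. pit x \<partial>\<mu>)"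
proof -
  have "(\<integral>\<^sup>+z. ennreal (label_weight pit qbar i z) \<partial>density (\<mu> \<Otimes>\<^sub>M count_space L) qbar)
      = (\<integral>\<^sup>+x. ennreal (pit x) \<partial>\<mu>)"
    using nn_integral_label_weight_power[OF L pit_meas q_meas pit_nonneg q_nonneg q_pos, of 0] by simp
  also have "\<dots> = ennreal (\<integral>x. pit x \<partial>\<mu>)"
    using pit_int pit_nonneg by (intro nn_integral_eq_integral) auto
  finally have "has_bochner_integral (density (\<mu> \<Otimes>\<^sub>M count_space L) qbar) (label_weight pit qbar i)
      (\<integral>x. pit x \<partial>\<mu>)"
    using borel_measurable_label_weight[OF pit_meas q_meas L(2)] pit_nonneg q_nonneg
    by (intro has_bochner_integral_nn_integral integral_nonneg_AE) (auto intro!: AE_I2 label_weight_nonneg)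
  then show "integrable (density (\<mu> \<Otimes>\<^sub>M count_space L) qbar) (label_weight pit qbar i)"
    and "(\<integral>z. label_weight pit qbar i z \<partial>density (\<mu> \<Otimes>\<^sub>M count_space L) qbar) = (\<integral>x. pit x \<partial>\<mu>)"
    by (auto simp: has_bochner_integral_iff)
qed

theorem lemma1:
  fixes \<mu> :: "'a measure" and pit :: "'a \<Rightarrow> real" and qbar :: "'a \<times> nat \<Rightarrow> real"
    and K N :: nat and Z :: real
  defines "Q \<equiv> density (\<mu> \<Otimes>\<^sub>M count_space {1..K}) (\<lambda>z. ennreal (qbar z))"
    and "P \<equiv> PiM {1..N} (\<lambda>_. density (\<mu> \<Otimes>\<^sub>M count_space {1..K}) (\<lambda>z. ennreal (qbar z)))"
  assumes pit_meas: "pit \<in> borel_measurable \<mu>"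
    and pit_nonneg: "\<And>x. x \<in> space \<mu> \<Longrightarrow> pit x \<ge> 0"
    and pit_int: "integrable \<mu> pit"
    and Z_def: "Z = (\<integral>x. pit x \<partial>\<mu>)"
    and Z_pos: "Z > 0"
    and q_meas: "qbar \<in> borel_measurable (\<mu> \<Otimes>\<^sub>M count_space {1..K})"
    and q_nonneg: "\<And>x l. x \<in> space \<mu> \<Longrightarrow> l \<in> {1..K} \<Longrightarrow> qbar (x, l) \<ge> 0"
    and Q_prob: "prob_space Q"
    and alpha_pos: "\<And>i. i \<in> {1..K} \<Longrightarrow> alpha \<mu> qbar i > 0"
    and q_pos: "\<And>i x. i \<in> {1..K} \<Longrightarrow> x \<in> space \<mu> \<Longrightarrow> pit x > 0 \<Longrightarrow> qbar (x, i) > 0"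
    and N_pos: "N \<ge> 1"
  shows "(\<forall>i \<in> {1..K}.
           (\<integral>\<omega>. Zhat N pit qbar \<omega> i \<partial>P) = Z
         \<and> evar P (\<lambda>\<omega>. Zhat N pit qbar \<omega> i / Z)
             = ennreal (1 / real N) *
               ((\<integral>\<^sup>+ x. ennreal ((pit x / Z) * ((pit x / Z) / qbar (x, i))) \<partial>\<mu>) - 1))
       \<and> (\<forall>i \<in> {1..K}. \<forall>j \<in> {1..K}. i \<noteq> j \<longrightarrow>
           cov P (\<lambda>\<omega>. Zhat N pit qbar \<omega> i / Z) (\<lambda>\<omega>. Zhat N pit qbar \<omega> j / Z) = - 1 / real N)"
proof -
  \<comment> \<open>alpha_pos is unused: the estimators involve qbar only, never the conditional
      densities qbar (., l) / alpha l.\<close>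
  interpret iid_sample Q N
    using Q_prob N_pos by (simp add: iid_sample_def iid_sample_axioms_def)
  have P_eq: "P = PiM {1..N} (\<lambda>_. Q)"
    unfolding P_def Q_def ..
  let ?W = "\<lambda>i. label_weight (\<lambda>x. pit x / Z) qbar i"
  have pi_meas: "(\<lambda>x. pit x / Z) \<in> borel_measurable \<mu>" and pi_int: "integrable \<mu> (\<lambda>x. pit x / Z)"
    and pi_nonneg: "\<And>x. x \<in> space \<mu> \<Longrightarrow> 0 \<le> pit x / Z"
    and q_pos_pi: "\<And>i x. i \<in> {1..K} \<Longrightarrow> x \<in> space \<mu> \<Longrightarrow> 0 < pit x / Z \<Longrightarrow> 0 < qbar (x, i)"
    using pit_meas pit_int pit_nonneg q_pos Z_pos by (auto simp: zero_less_divide_iff)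
  have W_nonneg: "\<And>i z. z \<in> space Q \<Longrightarrow> 0 \<le> ?W i z"
    unfolding Q_def using pi_nonneg q_nonneg by (auto intro: label_weight_nonneg)
  have W_int: "integrable Q (?W i)" and W_E: "expectation (?W i) = 1"
    and W_sq: "(\<integral>\<^sup>+z. ennreal (?W i z ^ 2) \<partial>Q)
        = (\<integral>\<^sup>+x. ennreal (pit x / Z * (pit x / Z / qbar (x, i))) \<partial>\<mu>)" if i: "i \<in> {1..K}" for i
    using integrable_label_weight[OF _ i pi_meas pi_nonneg pi_int q_meas q_nonneg q_pos_pi[OF i]]
      integral_label_weight[OF _ i pi_meas pi_nonneg pi_int q_meas q_nonneg q_pos_pi[OF i]]
      nn_integral_label_weight_power[OF _ i pi_meas q_meas pi_nonneg q_nonneg q_pos_pi[OF i], of 1]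
      Z_pos by (simp_all add: Q_def Z_def numeral_2_eq_2)
  show ?thesis
  proof (intro conjI ballI impI)
    fix i assume i: "i \<in> {1..K}"
    have "(\<integral>\<omega>. Zhat N pit qbar \<omega> i / Z \<partial>P) = 1"
      unfolding Zhat_divide_eq_sample_mean P_eq integral_sample_mean[OF W_int[OF i]] W_E[OF i] ..
    then show "(\<integral>\<omega>. Zhat N pit qbar \<omega> i \<partial>P) = Z"
      using Z_pos by simp
    show "evar P (\<lambda>\<omega>. Zhat N pit qbar \<omega> i / Z)
        = ennreal (1 / real N) * ((\<integral>\<^sup>+x. ennreal (pit x / Z * (pit x / Z / qbar (x, i))) \<partial>\<mu>) - 1)"
      using evar_sample_mean[OF W_int[OF i] W_nonneg] W_sq[OF i] W_E[OF i]
      by (simp add: P_eq Zhat_divide_eq_sample_mean)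
  next
    fix i j assume i: "i \<in> {1..K}" and j: "j \<in> {1..K}" and "i \<noteq> j"
    then have disjoint: "?W i z * ?W j z = 0" for z
      by (simp add: label_weight_def)
    have "cov Q (?W i) (?W j) = -1"
      using cov_eq_expectation_mult_minus[OF W_int[OF i] W_int[OF j]] W_E[OF i] W_E[OF j]
      by (simp add: disjoint)
    then show "cov P (\<lambda>\<omega>. Zhat N pit qbar \<omega> i / Z) (\<lambda>\<omega>. Zhat N pit qbar \<omega> j / Z) = - 1 / real N"
      using cov_sample_mean[OF W_int[OF i] W_int[OF j]] by (simp add: P_eq Zhat_divide_eq_sample_mean disjoint)
  qed
qed

end
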